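(* Let $\mathfrak u$ be either an infinite sequence with all terms in $\{0,1\}$, or a finite sequence of length $N\ge1$ with all terms in $\{0,1\}$. Then $\Upsilon(\Upsilon(\mathfrak u))=\mathfrak u$. Consequently $\Upsilon^{(6)}(\mathfrak u)=\mathfrak u$, i.e. all levels of the discrete helicoid generated by $\mathfrak u$ coincide, and its base level consists of three copies (rotated about $a_0$ by multiples of $120^\circ$) of the rhombus formed by the P-G triangle generated by $\mathfrak u$ together with the P-G triangle generated by $\Upsilon(\mathfrak u)$, these two triangles being mirror images of each other across their common edge $\Upsilon(\mathfrak u)$.
   Context: For a finite or infinite sequence $\mathfrak u=(a_0,a_1,\dots)$ of non-negative integers, the P-G triangle generated by $\mathfrak u$ consists of the numbers $d_k^{(j)}$ defined by $d_k^{(0)}=a_k$ and $d_k^{(j+1)}=|d_{k+1}^{(j)}-d_k^{(j)}|$ for $j,k\ge 0$ (for a finite sequence $(a_0,\dots,a_{N-1})$, for $0\le k\le N-1-j$). The operator $\Upsilon$ sends $\mathfrak u$ to the left edge $(d_0^{(0)},d_0^{(1)},d_0^{(2)},\dots)$ of its P-G triangle (a sequence of the same length as $\mathfrak u$); $\Upsilon^{(n)}$ denotes its $n$-th iterate. Geometrically, the P-G triangle of $\Upsilon^{(k+1)}(\mathfrak u)$ is placed rotated by $60^\circ$ clockwise about $a_0$ relative to that of $\Upsilon^{(k)}(\mathfrak u)$, sharing the edge $\Upsilon^{(k+1)}(\mathfrak u)$; the six triangles for $k=0,\dots,5$ form the base level of the helicoid, and level $n+1$ is the base level generated by $\Upsilon^{(6n)}(\mathfrak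 u)$. *)

theory Defs
  imports Main
begin

definition absdiff :: "nat \<Rightarrow> nat \<Rightarrow> nat" where
  "absdiff x y = (if x \<le> y then y - x else x - y)"

text \<open>P-G triangle: PG a j k is d_k^(j) for the sequence a = (a_0, a_1, ...).\<close>
fun PG :: "(nat \<Rightarrow> nat) \<Rightarrow> nat \<Rightarrow> nat \<Rightarrow> nat" where
  "PG a 0 k = a k"
| "PG a (Suc j) k = absdiff (PG a j (Suc k)) (PG a j k)"

definition Ups :: "(nat \<Rightarrow> nat) \<Rightarrow> (nat \<Rightarrow> nat)" where
  "Ups a = (\<lambda>j. PG a j 0)"

definition Ups_list :: "nat list \<Rightarrow> nat list" where
  "Ups_list xs = map (\<lambda>j. PG (\<lambda>k. xs ! k) j 0) [0..<length xs]"

end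

theory Submission
  imports Defs "HOL-Library.More_List"
begin

text \<open>On values in {0, 1} the absolute difference is addition modulo 2, so the rule
  d(j+1, k) = |d(j, k+1) - d(j, k)| can equally be solved for d(j, k+1) in terms of
  d(j+1, k) and d(j, k). Hence the P-G triangle generated by the left edge of the
  triangle of u is the transpose of the triangle of u (its mirror image across the
  common edge). Reading off the left edge of the transpose gives back u, so \<Upsilon> is an
  involution and every even iterate of it is the identity.\<close>

lemma absdiff_absdiff_cancel:
  assumes "x \<le> 1" "y \<le> 1"
  shows "absdiff (absdiff x y) y = x"
  using assms by (auto simp: absdiff_def)

lemma PG_cong:
  assumes "\<And>i. k \<le> i \<Longrightarrow> i \<le> k + j \<Longrightarrow> a i = b i"
  shows "PG a j k = PG b j k"
  using assms
proof (induction j arbitrary: k)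
  case (Suc j)
  have "PG a j (Suc k) = PG b j (Suc k)" and "PG a j k = PG b j k"
    using Suc.prems by (auto intro!: Suc.IH)
  then show ?case by simp
qed simp

lemma PG_le_1:
  assumes "\<And>i. a i \<le> 1"
  shows "PG a j k \<le> 1"
proof (induction j arbitrary: k)
  case (Suc j)
  from Suc.IH[of k] Suc.IH[of "Suc k"] show ?case
    by (auto simp: absdiff_def)
qed (use assms in simp)

lemma PG_Ups_transpose:
  assumes "\<And>i. a i \<le> 1"
  shows "PG (Ups a) j k = PG a k j"
proof (induction j arbitrary: k)
  case 0
  show ?case by (simp add: Ups_def)
next
  case (Suc j)
  have "PG (Ups a) (Suc j) k = absdiff (PG a (Suc k) j) (PG a k j)"
    using Suc.IH by simp
  also have "\<dots> = absdiff (absdiff (PG a k (Suc j)) (PG a k j)) (PG a k j)"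
    by simp
  also have "\<dots> = PG a k (Suc j)"
    using PG_le_1[OF assms] by (intro absdiff_absdiff_cancel)
  finally show ?case .
qed

lemma Ups_Ups:
  assumes "\<And>i. a i \<le> 1"
  shows "Ups (Ups a) = a"
proof
  fix i
  show "Ups (Ups a) i = a i"
    using assms PG_Ups_transpose[of a i 0] by (simp add: Ups_def)
qed

lemma funpow_even_involution:
  assumes "f (f x) = x"
  shows "(f ^^ (2 * m)) x = x"
proof -
  have "((f ^^ 2) ^^ m) x = x"
    by (induction m) (simp_all add: assms numeral_2_eq_2)
  then show ?thesis
    by (simp add: funpow_mult)
qed

text \<open>Finite sequences are reduced to their extension by zeros: by PG_cong the padding
  never reaches the entries d(j, k) with j + k below the length.\<close>

lemma PG_nth_eq_PG_nth_default:
  assumes "j + k < length xs"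
  shows "PG ((!) xs) j k = PG (nth_default 0 xs) j k"
  using assms by (intro PG_cong) (simp add: nth_default_nth)

lemma length_Ups_list [simp]: "length (Ups_list xs) = length xs"
  by (simp add: Ups_list_def)

lemma nth_Ups_list:
  assumes "i < length xs"
  shows "Ups_list xs ! i = Ups (nth_default 0 xs) i"
  using assms PG_nth_eq_PG_nth_default[of i 0 xs] by (simp add: Ups_list_def Ups_def)

lemma nth_default_le_1:
  fixes xs :: "nat list"
  assumes "set xs \<subseteq> {0, 1}"
  shows "nth_default 0 xs i \<le> 1"
  using assms nth_mem[of i xs] by (fastforce simp: nth_default_def)

lemma PG_Ups_list_transpose:
  assumes "set xs \<subseteq> {0, 1}" "j + k < length xs"
  shows "PG ((!) (Ups_list xs)) j k = PG ((!) xs) k j"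
proof -
  have "PG ((!) (Ups_list xs)) j k = PG (Ups (nth_default 0 xs)) j k"
    using assms(2) by (intro PG_cong) (simp add: nth_Ups_list)
  also have "\<dots> = PG (nth_default 0 xs) k j"
    using assms(1) by (intro PG_Ups_transpose nth_default_le_1)
  also have "\<dots> = PG ((!) xs) k j"
    using assms(2) PG_nth_eq_PG_nth_default[of k j xs] by simp
  finally show ?thesis .
qed

lemma Ups_list_Ups_list:
  assumes "set xs \<subseteq> {0, 1}"
  shows "Ups_list (Ups_list xs) = xs"
proof (rule nth_equalityI)
  fix i
  assume "i < length (Ups_list (Ups_list xs))"
  then have i: "i < length xs" by simp
  then have "Ups_list (Ups_list xs) ! i = PG ((!) (Ups_list xs)) i 0"
    by (simp add: Ups_list_def)
  also have "\<dots> = xs ! i"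
    using PG_Ups_list_transpose[OF assms, of i 0] i by simp
  finally show "Ups_list (Ups_list xs) ! i = xs ! i" .
qed simp

theorem theorem2p4:
  shows "(\<forall>a :: nat \<Rightarrow> nat. (\<forall>k. a k \<in> {0, 1}) \<longrightarrow>
            Ups (Ups a) = a
          \<and> (Ups ^^ 6) a = a
          \<and> (\<forall>n. (Ups ^^ (6 * n)) a = a)
          \<and> (\<forall>j k. PG (Ups a) j k = PG a k j))
       \<and> (\<forall>xs :: nat list. length xs \<ge> 1 \<and> set xs \<subseteq> {0, 1} \<longrightarrow>
            Ups_list (Ups_list xs) = xs
          \<and> (Ups_list ^^ 6) xs = xs
          \<and> (\<forall>n. (Ups_list ^^ (6 * n)) xs = xs)
          \<and> (\<forall>j k. j + k < length xs \<longrightarrow>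
                 PG (\<lambda>i. Ups_list xs ! i) j k = PG (\<lambda>i. xs ! i) k j))"
proof (intro conjI allI impI)
  fix a :: "nat \<Rightarrow> nat" and n j k :: nat
  assume a: "\<forall>k. a k \<in> {0, 1}"
  have a01: "a i \<le> 1" for i
    using a by (auto dest: spec[of _ i])
  show inv: "Ups (Ups a) = a" using Ups_Ups[OF a01] .
  show "(Ups ^^ (6 * n)) a = a" and "(Ups ^^ 6) a = a"
    using funpow_even_involution[of Ups a, OF inv, of "3 * n"]
      funpow_even_involution[of Ups a, OF inv, of 3] by simp_all
  show "PG (Ups a) j k = PG a k j" using PG_Ups_transpose[OF a01] .
next
  fix xs :: "nat list" and n j k :: nat
  assume "1 \<le> length xs \<and> set xs \<subseteq> {0, 1}"
  then have xs01: "set xs \<subseteq> {0, 1}" by simp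
  show inv: "Ups_list (Ups_list xs) = xs" using Ups_list_Ups_list[OF xs01] .
  show "(Ups_list ^^ (6 * n)) xs = xs" and "(Ups_list ^^ 6) xs = xs"
    using funpow_even_involution[of Ups_list xs, OF inv, of "3 * n"]
      funpow_even_involution[of Ups_list xs, OF inv, of 3] by simp_all
  show "j + k < length xs \<Longrightarrow> PG ((!) (Ups_list xs)) j k = PG ((!) xs) k j"
    using PG_Ups_list_transpose[OF xs01] .
qed

end
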